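(* Let $G=(V,E)$ be a finite graph and $\psi:(0,+\infty)\to\mathbb R$ a $C^1$ concave function with $\psi'(1)=0$. Suppose a function $f:V\times(0,\infty)\to(0,\infty)$ satisfies $$\Gamma^\psi(f)\le\frac{D_1}{t}+D_2\quad\text{at all vertices and all }t>0$$ for some positive constants $D_1,D_2$. Then for all $x,y\in V$ and $t>0$, $$f(x,t)\le f(y,t)\exp\left\{d(x,y)\sqrt{\frac{H_\psi\mu_{\max}}{w_{\min}}}\sqrt{\frac{D_1}{t}+D_2}\right\}.$$
   Context: Graphs: $G=(V,E)$ is a connected, locally finite graph; each edge $xy$ carries a weight $w_{xy}>0$, and $\mu:V\to(0,\infty)$ is a vertex measure; $y\sim x$ means $xy\in E$; $d$ is the graph distance; $\mu_{\max}=\max_x\mu(x)$, $w_{\min}=\min_{xy\in E}w_{xy}$. Laplacian: $\Delta f(x)=\frac{1}{\mu(x)}\sum_{y\sim x}w_{xy}(f(y)-f(x))$. For $f:V\to(0,\infty)$: $\Delta^\psi f(x)=\Delta\big[\psi\big(\tfrac{f}{f(x)}\big)\big](x)$; $\overline\psi(s)=\psi'(1)(s-1)-(\psi(s)-\psi(1))$, $\Gamma^\psi f=\Delta^{\overline\psi}f$ (applied to $f(\cdot,t)$ at each time). Harnack constant: $H_\psi=\sup_{x>1}\frac{\log^2x}{\overline\psi(x)}$ (assumed finite). *)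

theory Defs
  imports "HOL-Analysis.Analysis"
begin

definition weighted_graph ::
  "'a set \<Rightarrow> ('a \<Rightarrow> 'a \<Rightarrow> bool) \<Rightarrow> ('a \<Rightarrow> 'a \<Rightarrow> real) \<Rightarrow> ('a \<Rightarrow> real) \<Rightarrow> bool" where
  "weighted_graph V E w mu \<longleftrightarrow>
     (\<forall>x y. E x y \<longrightarrow> x \<in> V \<and> y \<in> V) \<and>
     (\<forall>x y. E x y \<longrightarrow> E y x) \<and>
     (\<forall>x y. E x y \<longrightarrow> w x y = w y x \<and> w x y > 0) \<and>
     (\<forall>x\<in>V. mu x > 0)"

definition is_walk :: "'a set \<Rightarrow> ('a \<Rightarrow> 'a \<Rightarrow> bool) \<Rightarrow> (nat \<Rightarrow> 'a) \<Rightarrow> nat \<Rightarrow> 'a \<Rightarrow> 'a \<Rightarrow> bool" where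
  "is_walk V E p n x y \<longleftrightarrow> p 0 = x \<and> p n = y \<and> (\<forall>i\<le>n. p i \<in> V) \<and> (\<forall>i<n. E (p i) (p (Suc i)))"

definition connected_graph :: "'a set \<Rightarrow> ('a \<Rightarrow> 'a \<Rightarrow> bool) \<Rightarrow> bool" where
  "connected_graph V E \<longleftrightarrow> (\<forall>x\<in>V. \<forall>y\<in>V. \<exists>p n. is_walk V E p n x y)"

definition gdist :: "'a set \<Rightarrow> ('a \<Rightarrow> 'a \<Rightarrow> bool) \<Rightarrow> 'a \<Rightarrow> 'a \<Rightarrow> nat" where
  "gdist V E x y = (LEAST n. \<exists>p. is_walk V E p n x y)"

definition mu_max :: "'a set \<Rightarrow> ('a \<Rightarrow> real) \<Rightarrow> real" where
  "mu_max V mu = Max (mu ` V)"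

definition w_min :: "('a \<Rightarrow> 'a \<Rightarrow> bool) \<Rightarrow> ('a \<Rightarrow> 'a \<Rightarrow> real) \<Rightarrow> real" where
  "w_min E w = Min {w x y | x y. E x y}"

definition laplacian ::
  "'a set \<Rightarrow> ('a \<Rightarrow> 'a \<Rightarrow> bool) \<Rightarrow> ('a \<Rightarrow> 'a \<Rightarrow> real) \<Rightarrow> ('a \<Rightarrow> real) \<Rightarrow> ('a \<Rightarrow> real) \<Rightarrow> 'a \<Rightarrow> real" where
  "laplacian V E w mu f x = (1 / mu x) * (\<Sum>y\<in>{y\<in>V. E x y}. w x y * (f y - f x))"

definition psibar :: "(real \<Rightarrow> real) \<Rightarrow> real \<Rightarrow> real" where
  "psibar psi s = deriv psi 1 * (s - 1) - (psi s - psi 1)"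

definition laplacian_phi ::
  "'a set \<Rightarrow> ('a \<Rightarrow> 'a \<Rightarrow> bool) \<Rightarrow> ('a \<Rightarrow> 'a \<Rightarrow> real) \<Rightarrow> ('a \<Rightarrow> real) \<Rightarrow> (real \<Rightarrow> real) \<Rightarrow> ('a \<Rightarrow> real) \<Rightarrow> 'a \<Rightarrow> real" where
  "laplacian_phi V E w mu phi f x = laplacian V E w mu (\<lambda>y. phi (f y / f x)) x"

definition Gamma_psi ::
  "'a set \<Rightarrow> ('a \<Rightarrow> 'a \<Rightarrow> bool) \<Rightarrow> ('a \<Rightarrow> 'a \<Rightarrow> real) \<Rightarrow> ('a \<Rightarrow> real) \<Rightarrow> (real \<Rightarrow> real) \<Rightarrow> ('a \<Rightarrow> real) \<Rightarrow> 'a \<Rightarrow> real" where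
  "Gamma_psi V E w mu psi f x = laplacian_phi V E w mu (psibar psi) f x"

text \<open>Harnack constant H_psi = sup_{x>1} log^2 x / psibar x, and its finiteness
  (which includes psibar x > 0 for x > 1, otherwise the quotient is +infinity).\<close>
definition harnack_const :: "(real \<Rightarrow> real) \<Rightarrow> real" where
  "harnack_const psi = (SUP x\<in>{1<..}. (ln x)\<^sup>2 / psibar psi x)"

definition harnack_finite :: "(real \<Rightarrow> real) \<Rightarrow> bool" where
  "harnack_finite psi \<longleftrightarrow> (\<forall>x>1. psibar psi x > 0) \<and>
      bdd_above ((\<lambda>x. (ln x)\<^sup>2 / psibar psi x) ` {1<..})"

end

theory Submission
  imports Defs
begin

text \<open>Along an edge \<open>ab\<close>, every summand of \<open>\<Gamma>\<^sup>\<psi> f(a)\<close> is nonnegative by concavity of \<open>\<psi>\<close>,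
  so the single term \<open>w\<^sub>a\<^sub>b psibar(f(b)/f(a))\<close> is at most \<open>\<mu>(a)(D\<^sub>1/t + D\<^sub>2)\<close>. The definition of
  \<open>H\<^sub>\<psi>\<close> converts this into \<open>log\<^sup>2(f(b)/f(a)) \<le> H\<^sub>\<psi> \<mu>\<^sub>m\<^sub>a\<^sub>x (D\<^sub>1/t + D\<^sub>2) / w\<^sub>m\<^sub>i\<^sub>n\<close>, i.e. a bound on the
  ratio of \<open>f\<close> across one edge; multiplying these bounds along a shortest walk gives the
  theorem.\<close>

lemma psibar_at_1 [simp]: "psibar psi 1 = 0"
  unfolding psibar_def by simp

lemma psibar_nonneg_if_concave:
  fixes psi :: "real \<Rightarrow> real"
  assumes concave: "concave_on {0<..} psi"
    and deriv_1: "(psi has_real_derivative d) (at 1)"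
    and s: "s > 0"
  shows "psibar psi s \<ge> 0"
proof -
  have "convex_on {0<..} (\<lambda>x. - psi x)"
    using concave by (simp add: convex_on_iff_concave)
  then have "- psi s - - psi 1 \<ge> - d * (s - 1)"
  proof (rule convex_on_imp_above_tangent)
    show "connected {0::real<..}" by (simp add: is_interval_connected)
    show "(1::real) \<in> interior {0<..}" by (simp add: interior_open)
    show "s \<in> {0<..}" using s by simp
    show "((\<lambda>x. - psi x) has_field_derivative - d) (at 1 within {0<..})"
      using DERIV_minus[OF deriv_1] by (rule has_field_derivative_at_within)
  qed
  moreover have "deriv psi 1 = d"
    using deriv_1 by (rule DERIV_imp_deriv)
  ultimately show ?thesis
    unfolding psibar_def by simp
qed

lemma harnack_const_bound:
  assumes "harnack_finite psi" and "s > 1"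
  shows "(ln s)\<^sup>2 \<le> harnack_const psi * psibar psi s"
proof -
  have pos: "psibar psi s > 0"
    using assms unfolding harnack_finite_def by blast
  have "(ln s)\<^sup>2 / psibar psi s \<le> harnack_const psi"
    unfolding harnack_const_def
    using assms by (intro cSUP_upper) (auto simp: harnack_finite_def)
  with pos show ?thesis
    by (simp add: divide_le_eq mult.commute)
qed

lemma harnack_const_nonneg:
  assumes "harnack_finite psi"
  shows "harnack_const psi \<ge> 0"
proof -
  have "0 < psibar psi 2"
    using assms unfolding harnack_finite_def by simp
  have "(ln 2)\<^sup>2 \<le> harnack_const psi * psibar psi (2::real)"
    using assms by (rule harnack_const_bound) simp
  then have "0 \<le> harnack_const psi * psibar psi 2"
    by (meson order_trans zero_le_power2)
  with \<open>0 < psibar psi 2\<close> show ?thesis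
    by (simp add: zero_le_mult_iff)
qed

lemma le_exp_sqrt_harnack_if_psibar_le:
  assumes H: "harnack_finite psi"
    and s: "s > 0" and B: "B \<ge> 0" and psibar_le: "psibar psi s \<le> B"
  shows "s \<le> exp (sqrt (harnack_const psi * B))"
proof (cases "s > 1")
  case True
  have "(ln s)\<^sup>2 \<le> harnack_const psi * B"
    using harnack_const_bound[OF H True] psibar_le harnack_const_nonneg[OF H]
    by (meson mult_left_mono order_trans)
  then have "ln s \<le> sqrt (harnack_const psi * B)"
    using True by (metis abs_of_pos ln_gt_zero real_sqrt_abs real_sqrt_le_mono)
  then show ?thesis
    using s by (metis exp_le_cancel_iff exp_ln)
next
  case False
  then have "s \<le> 1" by simp
  also have "1 \<le> exp (sqrt (harnack_const psi * B))"
    using B harnack_const_nonneg[OF H] by simp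
  finally show ?thesis .
qed

lemma weighted_graph_edgeD:
  assumes "weighted_graph V E w mu" and "E a b"
  shows "a \<in> V" "b \<in> V" "E b a" "w a b > 0" "mu a > 0"
  using assms unfolding weighted_graph_def by blast+

lemma w_min_pos_le_weight:
  assumes "weighted_graph V E w mu" and "finite V" and "E a b"
  shows "0 < w_min E w" "w_min E w \<le> w a b"
proof -
  let ?W = "{w x y | x y. E x y}"
  have "?W \<subseteq> (\<lambda>(x, y). w x y) ` (V \<times> V)"
    using assms(1) unfolding weighted_graph_def by fastforce
  then have fin: "finite ?W"
    using assms(2) by (meson finite_SigmaI finite_imageI finite_subset)
  have mem: "w a b \<in> ?W" using assms(3) by blast
  show "w_min E w \<le> w a b"
    unfolding w_min_def using fin mem by (rule Min_le)
  show "0 < w_min E w"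
    unfolding w_min_def using fin mem weighted_graph_edgeD[OF assms(1)]
    by (subst Min_gr_iff) auto
qed

lemma mu_max_ge:
  assumes "finite V" and "a \<in> V"
  shows "mu a \<le> mu_max V mu"
  unfolding mu_max_def using assms by simp

lemma is_walk_gdist:
  assumes "connected_graph V E" and "x \<in> V" and "y \<in> V"
  obtains p where "is_walk V E p (gdist V E x y) x y"
proof -
  have "\<exists>n p. is_walk V E p n x y"
    using assms unfolding connected_graph_def by blast
  then have "\<exists>p. is_walk V E p (gdist V E x y) x y"
    unfolding gdist_def by (rule LeastI_ex)
  then show ?thesis using that by blast
qed

lemma walk_chain_bound:
  fixes g :: "'a \<Rightarrow> real"
  assumes walk: "is_walk V E p n x y"
    and edge: "\<And>a b. E a b \<Longrightarrow> g a \<le> g b * c"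
    and c: "c \<ge> 0"
  shows "g x \<le> g y * c ^ n"
proof -
  have "g (p 0) \<le> g (p i) * c ^ i" if "i \<le> n" for i
    using that
  proof (induction i)
    case 0
    then show ?case by simp
  next
    case (Suc i)
    have "E (p i) (p (Suc i))"
      using walk Suc.prems unfolding is_walk_def by simp
    then have "g (p i) * c ^ i \<le> g (p (Suc i)) * c * c ^ i"
      using edge c by (simp add: mult_right_mono)
    with Suc show ?case by simp
  qed
  then show ?thesis
    using walk unfolding is_walk_def by (metis order_refl)
qed

lemma Gamma_psi_edge_term_le:
  assumes graph: "weighted_graph V E w mu" and finV: "finite V"
    and psibar_nonneg: "\<And>s. s > 0 \<Longrightarrow> psibar psi s \<ge> 0"
    and g_pos: "\<And>z. z \<in> V \<Longrightarrow> g z > 0"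
    and ab: "E a b"
    and Gamma: "Gamma_psi V E w mu psi g a \<le> C"
  shows "w a b * psibar psi (g b / g a) \<le> mu a * C"
proof -
  note edge = weighted_graph_edgeD[OF graph]
  let ?N = "{z \<in> V. E a z}"
  have ga: "g a / g a = 1" using g_pos[OF edge(1)[OF ab]] by simp
  have "0 \<le> w a z * psibar psi (g z / g a)" if "z \<in> ?N" for z
    using that edge(4) g_pos psibar_nonneg edge(1)[OF ab]
    by (intro mult_nonneg_nonneg) (auto intro: less_imp_le)
  then have "w a b * psibar psi (g b / g a) \<le> (\<Sum>z\<in>?N. w a z * psibar psi (g z / g a))"
    using ab edge(2)[OF ab] finV by (intro member_le_sum) auto
  also have "\<dots> = mu a * Gamma_psi V E w mu psi g a"
    using edge(5)[OF ab]
    unfolding Gamma_psi_def laplacian_phi_def laplacian_def ga by simp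
  also have "\<dots> \<le> mu a * C"
    using Gamma edge(5)[OF ab] by simp
  finally show ?thesis .
qed

lemma ratio_le_exp_across_edge:
  fixes g :: "'a \<Rightarrow> real"
  assumes graph: "weighted_graph V E w mu" and finV: "finite V"
    and psibar_nonneg: "\<And>s. s > 0 \<Longrightarrow> psibar psi s \<ge> 0"
    and H_fin: "harnack_finite psi"
    and g_pos: "\<And>z. z \<in> V \<Longrightarrow> g z > 0"
    and Gamma: "\<And>z. z \<in> V \<Longrightarrow> Gamma_psi V E w mu psi g z \<le> C"
    and C: "C \<ge> 0"
    and ab: "E a b"
  shows "g a \<le> g b * exp (sqrt (harnack_const psi * mu_max V mu / w_min E w) * sqrt C)"
proof -
  have "E b a" using weighted_graph_edgeD(3)[OF graph ab] .
  note ba = weighted_graph_edgeD[OF graph \<open>E b a\<close>]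
  note w = w_min_pos_le_weight[OF graph finV \<open>E b a\<close>]
  define s where "s = g a / g b"
  have s: "s > 0" unfolding s_def using g_pos ba(1,2) by simp
  have mu_max: "mu b \<le> mu_max V mu" using mu_max_ge[OF finV ba(1)] .
  have "w_min E w * psibar psi s \<le> w b a * psibar psi s"
    using w(2) psibar_nonneg[OF s] by (rule mult_right_mono)
  also have "\<dots> \<le> mu b * C"
    unfolding s_def
    by (rule Gamma_psi_edge_term_le[OF graph finV psibar_nonneg g_pos \<open>E b a\<close> Gamma[OF ba(1)]])
  also have "\<dots> \<le> mu_max V mu * C"
    using mu_max C by (simp add: mult_right_mono)
  finally have "psibar psi s \<le> mu_max V mu * C / w_min E w"
    using w(1) by (simp add: le_divide_eq mult.commute)
  moreover have "0 \<le> mu_max V mu * C / w_min E w"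
    using mu_max ba(5) C w(1) by simp
  ultimately have "s \<le> exp (sqrt (harnack_const psi * (mu_max V mu * C / w_min E w)))"
    using le_exp_sqrt_harnack_if_psibar_le[OF H_fin s] by blast
  also have "\<dots> = exp (sqrt (harnack_const psi * mu_max V mu / w_min E w) * sqrt C)"
    unfolding real_sqrt_mult[symmetric] by (simp add: algebra_simps)
  finally show ?thesis
    using g_pos[OF ba(1)] unfolding s_def by (simp add: divide_le_eq mult.commute)
qed

theorem mainTheorem14:
  fixes V :: "'a set" and E :: "'a \<Rightarrow> 'a \<Rightarrow> bool" and w :: "'a \<Rightarrow> 'a \<Rightarrow> real"
    and mu :: "'a \<Rightarrow> real" and psi psi' :: "real \<Rightarrow> real"
    and f :: "'a \<Rightarrow> real \<Rightarrow> real" and D1 D2 :: real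
  assumes graph: "weighted_graph V E w mu"
    and finV: "finite V"
    and conn: "connected_graph V E"
    and psi_deriv: "\<And>s. s > 0 \<Longrightarrow> (psi has_real_derivative psi' s) (at s)"
    and psi'_cont: "continuous_on {0<..} psi'"
    and psi_concave: "concave_on {0<..} psi"
    and psi'_1: "psi' 1 = 0"
    and H_fin: "harnack_finite psi"
    and f_pos: "\<And>x t. x \<in> V \<Longrightarrow> t > 0 \<Longrightarrow> f x t > 0"
    and D1: "D1 > 0" and D2: "D2 > 0"
    and grad: "\<And>x t. x \<in> V \<Longrightarrow> t > 0 \<Longrightarrow>
                 Gamma_psi V E w mu psi (\<lambda>y. f y t) x \<le> D1 / t + D2"
    and x: "x \<in> V" and y: "y \<in> V" and t: "t > 0"
  shows "f x t \<le> f y t * exp (real (gdist V E x y)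
            * sqrt (harnack_const psi * mu_max V mu / w_min E w)
            * sqrt (D1 / t + D2))"
proof -
  define K where "K = sqrt (harnack_const psi * mu_max V mu / w_min E w) * sqrt (D1 / t + D2)"
  have edge_bound: "f a t \<le> f b t * exp K" if "E a b" for a b
    unfolding K_def
  proof (rule ratio_le_exp_across_edge[OF graph finV _ H_fin _ _ _ that])
    show "psibar psi s \<ge> 0" if "s > 0" for s
      using psibar_nonneg_if_concave[OF psi_concave psi_deriv that] by simp
    show "Gamma_psi V E w mu psi (\<lambda>y. f y t) z \<le> D1 / t + D2" if "z \<in> V" for z
      using grad[OF that t] .
    show "0 \<le> D1 / t + D2" using D1 D2 t by simp
  qed (use f_pos t in auto)
  obtain p where "is_walk V E p (gdist V E x y) x y"
    using is_walk_gdist[OF conn x y] .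
  then have "f x t \<le> f y t * exp K ^ gdist V E x y"
    by (rule walk_chain_bound[where g = "\<lambda>z. f z t"]) (use edge_bound in auto)
  then show ?thesis
    unfolding K_def by (simp add: exp_of_nat_mult[symmetric] mult.assoc)
qed

end
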